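(* Let $G$ be a countable group, and identify the power set $\mathbf{P}_G$ with $\{0,1\}^G$ (via characteristic functions) carrying the product topology. Then, as subsets of $\mathbf{P}_G$: the family $\mathbf{L}_G$ of large subsets is $F_\sigma$; the family $\mathbf{T}_G$ of thick subsets is $G_\delta$; the family $\mathbf{PT}_G$ of prethick subsets is $G_{\delta\sigma}$; and the families $\mathbf{S}_G$ of small subsets and $\mathbf{EL}_G$ of extralarge subsets are $F_{\sigma\delta}$.
   Context: Let $G$ be a group and $\mathcal{F}_G$ the family of finite subsets of $G$. A subset $A\subseteq G$ is large if $G=FA$ for some $F\in\mathcal{F}_G$; small if $L\setminus A$ is large for every large $L\subseteq G$; extralarge if $G\setminus A$ is small; thick if for every $F\in\mathcal{F}_G$ there is $a\in A$ with $Fa\subseteq A$; prethick if $FA$ is thick for some $F\in\mathcal{F}_G$. The topology on $\mathbf{P}_G$ has as subbase the sets $\{X: K\subseteq X\}$ and $\{X: X\cap K=\emptyset\}$ for finite $K\subseteq G$. *)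

theory Defs
  imports "HOL-Analysis.Analysis" "HOL-Algebra.Coset"
begin

definition large_set :: "('a, 'b) monoid_scheme \<Rightarrow> 'a set \<Rightarrow> bool" where
  "large_set G A \<longleftrightarrow> (\<exists>F. finite F \<and> F \<subseteq> carrier G \<and> carrier G = F <#>\<^bsub>G\<^esub> A)"

definition small_set :: "('a, 'b) monoid_scheme \<Rightarrow> 'a set \<Rightarrow> bool" where
  "small_set G A \<longleftrightarrow> (\<forall>L. L \<subseteq> carrier G \<longrightarrow> large_set G L \<longrightarrow> large_set G (L - A))"

definition extralarge_set :: "('a, 'b) monoid_scheme \<Rightarrow> 'a set \<Rightarrow> bool" where
  "extralarge_set G A \<longleftrightarrow> small_set G (carrier G - A)"

definition thick_set :: "('a, 'b) monoid_scheme \<Rightarrow> 'a set \<Rightarrow> bool" where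
  "thick_set G A \<longleftrightarrow> (\<forall>F. finite F \<and> F \<subseteq> carrier G \<longrightarrow> (\<exists>a\<in>A. F #>\<^bsub>G\<^esub> a \<subseteq> A))"

definition prethick_set :: "('a, 'b) monoid_scheme \<Rightarrow> 'a set \<Rightarrow> bool" where
  "prethick_set G A \<longleftrightarrow> (\<exists>F. finite F \<and> F \<subseteq> carrier G \<and> thick_set G (F <#>\<^bsub>G\<^esub> A))"

text \<open>The topology on the power set of G (identified with the product space of 2-point
  discrete spaces) given by the subbase of sets {X. K \<subseteq> X} and {X. X \<inter> K = {}}, K finite.\<close>
definition PG_topology :: "('a, 'b) monoid_scheme \<Rightarrow> 'a set topology" where
  "PG_topology G = topology_generated_by
     ((\<lambda>K. {X. X \<subseteq> carrier G \<and> K \<subseteq> X}) ` {K. finite K \<and> K \<subseteq> carrier G}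
      \<union> (\<lambda>K. {X. X \<subseteq> carrier G \<and> X \<inter> K = {}}) ` {K. finite K \<and> K \<subseteq> carrier G})"

definition gdelta_sigma_in :: "'x topology \<Rightarrow> 'x set \<Rightarrow> bool" where
  "gdelta_sigma_in X S \<longleftrightarrow> (countable union_of gdelta_in X) S"

definition fsigma_delta_in :: "'x topology \<Rightarrow> 'x set \<Rightarrow> bool" where
  "fsigma_delta_in X S \<longleftrightarrow> ((countable intersection_of fsigma_in X) relative_to topspace X) S"

definition LG where "LG G = {A. A \<subseteq> carrier G \<and> large_set G A}"
definition SG where "SG G = {A. A \<subseteq> carrier G \<and> small_set G A}"
definition ELG where "ELG G = {A. A \<subseteq> carrier G \<and> extralarge_set G A}"
definition TG where "TG G = {A. A \<subseteq> carrier G \<and> thick_set G A}"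
definition PTG where "PTG G = {A. A \<subseteq> carrier G \<and> prethick_set G A}"

end

theory Submission imports Defs begin

text \<open>Each family is cut out by a formula whose quantifiers range over \<open>G\<close> and over the
  finite subsets of \<open>G\<close> (both countable) and whose matrix depends on only finitely many
  coordinates of \<open>X\<close>. Such matrices are clopen in the product topology, so the Borel class is
  read off from the quantifier prefix: largeness is \<open>\<exists>F \<forall>g \<exists>f\<in>F\<close> (\<open>F\<^sub>\<sigma>\<close>), thickness
  \<open>\<forall>H \<exists>a\<close> (\<open>G\<^sub>\<delta>\<close>), prethickness \<open>\<exists>F \<forall>H \<exists>a\<close> (\<open>G\<^sub>\<delta>\<^sub>\<sigma>\<close>). Since small sets are closed under
  finite unions and left translations, \<open>A\<close> is small iff \<open>G - F A\<close> is large for every finite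
  \<open>F\<close>, which is \<open>\<forall>F \<exists>E \<forall>g \<exists>e\<in>E\<close> (\<open>F\<^sub>\<sigma>\<^sub>\<delta>\<close>); extralargeness is smallness of the complement,
  and complementation preserves finite determination.\<close>

lemma closedin_Collect_Ball:
  assumes "\<And>i. i \<in> I \<Longrightarrow> closedin T {x \<in> topspace T. P i x}"
  shows "closedin T {x \<in> topspace T. \<forall>i\<in>I. P i x}"
proof -
  have "{x \<in> topspace T. \<forall>i\<in>I. P i x}
      = \<Inter> (insert (topspace T) ((\<lambda>i. {x \<in> topspace T. P i x}) ` I))"
    by blast
  also have "closedin T \<dots>"
    using assms by (intro closedin_Inter) auto
  finally show ?thesis .
qed

lemma openin_Collect_Bex:
  assumes "\<And>i. i \<in> I \<Longrightarrow> openin T {x \<in> topspace T. P i x}"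
  shows "openin T {x \<in> topspace T. \<exists>i\<in>I. P i x}"
proof -
  have "{x \<in> topspace T. \<exists>i\<in>I. P i x} = (\<Union>i\<in>I. {x \<in> topspace T. P i x})"
    by blast
  then show ?thesis
    using assms by auto
qed

lemma fsigma_in_Collect_Bex:
  assumes "countable I" and "\<And>i. i \<in> I \<Longrightarrow> closedin T {x \<in> topspace T. P i x}"
  shows "fsigma_in T {x \<in> topspace T. \<exists>i\<in>I. P i x}"
proof -
  have "{x \<in> topspace T. \<exists>i\<in>I. P i x} = \<Union> ((\<lambda>i. {x \<in> topspace T. P i x}) ` I)"
    by blast
  also have "fsigma_in T \<dots>"
    using assms by (intro fsigma_in_Union closed_imp_fsigma_in) auto
  finally show ?thesis .
qed

lemma gdelta_in_Collect_Ball: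
  assumes "countable I" and "\<And>i. i \<in> I \<Longrightarrow> openin T {x \<in> topspace T. P i x}"
  shows "gdelta_in T {x \<in> topspace T. \<forall>i\<in>I. P i x}"
proof -
  have "{x \<in> topspace T. \<forall>i\<in>I. P i x}
      = \<Inter> (insert (topspace T) ((\<lambda>i. {x \<in> topspace T. P i x}) ` I))"
    by blast
  also have "gdelta_in T \<dots>"
    using assms by (intro gdelta_in_Inter open_imp_gdelta_in) auto
  finally show ?thesis .
qed

lemma gdelta_sigma_in_Collect_Bex:
  assumes "countable I" and "\<And>i. i \<in> I \<Longrightarrow> gdelta_in T {x \<in> topspace T. P i x}"
  shows "gdelta_sigma_in T {x \<in> topspace T. \<exists>i\<in>I. P i x}"
proof -
  have "{x \<in> topspace T. \<exists>i\<in>I. P i x} = (\<Union>i\<in>I. {x \<in> topspace T. P i x})"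
    by blast
  also have "gdelta_sigma_in T \<dots>"
    unfolding gdelta_sigma_in_def
    using assms by (intro countable_union_of_UN countable_union_of_inc) auto
  finally show ?thesis .
qed

lemma fsigma_delta_in_Collect_Ball:
  assumes "countable I" and "\<And>i. i \<in> I \<Longrightarrow> fsigma_in T {x \<in> topspace T. P i x}"
  shows "fsigma_delta_in T {x \<in> topspace T. \<forall>i\<in>I. P i x}"
proof -
  have "{x \<in> topspace T. \<forall>i\<in>I. P i x} = topspace T \<inter> (\<Inter>i\<in>I. {x \<in> topspace T. P i x})"
    by blast
  moreover have "(countable intersection_of fsigma_in T) (\<Inter>i\<in>I. {x \<in> topspace T. P i x})"
    using assms by (intro countable_intersection_of_INT countable_intersection_of_inc) auto
  ultimately show ?thesis
    unfolding fsigma_delta_in_def relative_to_def by auto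
qed

lemma topspace_PG_topology: "topspace (PG_topology G) = Pow (carrier G)"
proof -
  have "Pow (carrier G) \<in> (\<lambda>K. {X. X \<subseteq> carrier G \<and> K \<subseteq> X}) ` {K. finite K \<and> K \<subseteq> carrier G}"
    by (rule image_eqI[of _ _ "{}"]) auto
  then show ?thesis
    unfolding PG_topology_def topology_generated_by_topspace by auto
qed

lemma openin_PG_topology_superset:
  "finite K \<Longrightarrow> K \<subseteq> carrier G \<Longrightarrow> openin (PG_topology G) {X. X \<subseteq> carrier G \<and> K \<subseteq> X}"
  unfolding PG_topology_def
  by (rule topology_generated_by_Basis, rule UnI1, rule image_eqI[OF refl]) simp

lemma openin_PG_topology_disjoint:
  "finite K \<Longrightarrow> K \<subseteq> carrier G \<Longrightarrow> openin (PG_topology G) {X. X \<subseteq> carrier G \<and> X \<inter> K = {}}"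
  unfolding PG_topology_def
  by (rule topology_generated_by_Basis, rule UnI2, rule image_eqI[OF refl]) simp

text \<open>A condition on \<open>X\<close> that only depends on \<open>X \<inter> K\<close> for a finite \<open>K\<close> is a finite
  union of basic cylinders \<open>{X. X \<inter> K = J}\<close>, and so is its negation.\<close>

lemma openin_PG_topology_finitely_determined:
  assumes K: "finite K" "K \<subseteq> carrier G"
    and determined: "\<And>X. X \<subseteq> carrier G \<Longrightarrow> P X \<longleftrightarrow> P (X \<inter> K)"
  shows "openin (PG_topology G) {X \<in> topspace (PG_topology G). P X}"
proof -
  define cylinder where "cylinder J =
    {X. X \<subseteq> carrier G \<and> J \<subseteq> X} \<inter> {X. X \<subseteq> carrier G \<and> X \<inter> (K - J) = {}}" for J
  have "{X \<in> topspace (PG_topology G). P X} = (\<Union>J \<in> {J. J \<subseteq> K \<and> P J}. cylinder J)"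
  proof (intro equalityI subsetI)
    fix X assume "X \<in> {X \<in> topspace (PG_topology G). P X}"
    then have "X \<subseteq> carrier G" "P (X \<inter> K)"
      using determined by (auto simp: topspace_PG_topology)
    then show "X \<in> (\<Union>J \<in> {J. J \<subseteq> K \<and> P J}. cylinder J)"
      unfolding cylinder_def by blast
  next
    fix X assume "X \<in> (\<Union>J \<in> {J. J \<subseteq> K \<and> P J}. cylinder J)"
    then obtain J where "P J" "X \<subseteq> carrier G" "X \<inter> K = J"
      unfolding cylinder_def by blast
    then show "X \<in> {X \<in> topspace (PG_topology G). P X}"
      using determined by (auto simp: topspace_PG_topology)
  qed
  moreover have "openin (PG_topology G) (cylinder J)" if "J \<subseteq> K" for J
    unfolding cylinder_def using K that
    by (intro openin_Int openin_PG_topology_superset openin_PG_topology_disjoint)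
      (auto intro: finite_subset)
  ultimately show ?thesis
    by (auto intro!: openin_Union)
qed

lemma closedin_PG_topology_finitely_determined:
  assumes "finite K" "K \<subseteq> carrier G"
    and "\<And>X. X \<subseteq> carrier G \<Longrightarrow> P X \<longleftrightarrow> P (X \<inter> K)"
  shows "closedin (PG_topology G) {X \<in> topspace (PG_topology G). P X}"
proof -
  have "openin (PG_topology G) {X \<in> topspace (PG_topology G). \<not> P X}"
    using assms by (intro openin_PG_topology_finitely_determined) auto
  moreover have "topspace (PG_topology G) - {X \<in> topspace (PG_topology G). P X}
      = {X \<in> topspace (PG_topology G). \<not> P X}"
    by blast
  ultimately show ?thesis
    by (simp add: closedin_def)
qed

context group
begin

lemma mem_set_mult_iff:
  assumes "F \<subseteq> carrier G" "A \<subseteq> carrier G"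
  shows "x \<in> F <#> A \<longleftrightarrow> x \<in> carrier G \<and> (\<exists>f\<in>F. inv f \<otimes> x \<in> A)"
proof
  assume "x \<in> F <#> A"
  then obtain f a where fa: "f \<in> F" "a \<in> A" "x = f \<otimes> a"
    unfolding set_mult_def by blast
  moreover have "f \<in> carrier G" "a \<in> carrier G"
    using fa assms by auto
  ultimately have "inv f \<otimes> x = a"
    by (simp add: m_assoc[symmetric])
  with fa \<open>f \<in> carrier G\<close> \<open>a \<in> carrier G\<close>
  show "x \<in> carrier G \<and> (\<exists>f\<in>F. inv f \<otimes> x \<in> A)"
    by (intro conjI bexI[of _ f]) auto
next
  assume "x \<in> carrier G \<and> (\<exists>f\<in>F. inv f \<otimes> x \<in> A)"
  then obtain f where f: "x \<in> carrier G" "f \<in> F" "inv f \<otimes> x \<in> A"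
    by blast
  moreover have "f \<in> carrier G"
    using f assms by auto
  ultimately have "x = f \<otimes> (inv f \<otimes> x)"
    by (simp add: m_assoc[symmetric])
  with f show "x \<in> F <#> A"
    unfolding set_mult_def by blast
qed

lemma mem_set_mult_Int_iff:
  assumes "F \<subseteq> carrier G" "A \<subseteq> carrier G" and "\<And>f. f \<in> F \<Longrightarrow> inv f \<otimes> x \<in> K"
  shows "x \<in> F <#> (A \<inter> K) \<longleftrightarrow> x \<in> F <#> A"
proof -
  have "A \<inter> K \<subseteq> carrier G"
    using assms(2) by blast
  then show ?thesis
    using assms mem_set_mult_iff[of F A x] mem_set_mult_iff[of F "A \<inter> K" x] by auto
qed

lemma large_set_iff:
  assumes "A \<subseteq> carrier G"
  shows "large_set G A \<longleftrightarrow> (\<exists>F\<in>Fpow (carrier G). \<forall>g\<in>carrier G. \<exists>f\<in>F. inv f \<otimes> g \<in> A)"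
proof -
  have "carrier G = F <#> A \<longleftrightarrow> (\<forall>g\<in>carrier G. \<exists>f\<in>F. inv f \<otimes> g \<in> A)"
    if "F \<subseteq> carrier G" for F
    using mem_set_mult_iff[OF that assms] by auto
  then show ?thesis
    unfolding large_set_def Fpow_def Bex_def mem_Collect_eq by blast
qed

lemma large_set_carrier: "large_set G (carrier G)"
  unfolding large_set_iff[OF order_refl] by (intro bexI[of _ "{\<one>}"]) (auto simp: Fpow_def)

text \<open>If \<open>F\<close> witnesses that \<open>L\<close> is large, then \<open>f F f\<inverse>\<close> witnesses it for \<open>f L\<close>.\<close>

lemma large_set_left_translate:
  assumes "L \<subseteq> carrier G" "f \<in> carrier G" and "large_set G L"
  shows "large_set G ({f} <#> L)"
proof -
  obtain F where F: "F \<in> Fpow (carrier G)" "\<forall>g\<in>carrier G. \<exists>k\<in>F. inv k \<otimes> g \<in> L"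
    using assms large_set_iff by blast
  define F' where "F' = (\<lambda>k. f \<otimes> k \<otimes> inv f) ` F"
  have "F' \<in> Fpow (carrier G)"
    using F assms(2) by (auto simp: F'_def Fpow_def)
  moreover have "\<exists>k'\<in>F'. inv k' \<otimes> g \<in> {f} <#> L" if g: "g \<in> carrier G" for g
  proof -
    obtain k where k: "k \<in> F" "inv k \<otimes> (inv f \<otimes> g) \<in> L"
      using F g assms(2) by auto
    have "k \<in> carrier G"
      using F k(1) by (auto simp: Fpow_def)
    then have "inv f \<otimes> (inv (f \<otimes> k \<otimes> inv f) \<otimes> g) = inv k \<otimes> (inv f \<otimes> g)"
      using g assms(2) by (simp add: inv_mult_group m_assoc[symmetric])
    then have "inv (f \<otimes> k \<otimes> inv f) \<otimes> g \<in> {f} <#> L"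
      using k(2) g assms \<open>k \<in> carrier G\<close> by (simp add: mem_set_mult_iff)
    then show ?thesis
      using k(1) unfolding F'_def by blast
  qed
  moreover have "{f} <#> L \<subseteq> carrier G"
    using assms by (intro setmult_subset_G) auto
  ultimately show ?thesis
    using large_set_iff by blast
qed

lemma small_set_Un:
  assumes "small_set G A" "small_set G B"
  shows "small_set G (A \<union> B)"
  unfolding small_set_def
proof (intro allI impI)
  fix L assume "L \<subseteq> carrier G" "large_set G L"
  then have "large_set G (L - A)"
    using assms(1) unfolding small_set_def by simp
  moreover have "L - A \<subseteq> carrier G"
    using \<open>L \<subseteq> carrier G\<close> by blast
  ultimately have "large_set G (L - A - B)"
    using assms(2) unfolding small_set_def by simp
  moreover have "L - A - B = L - (A \<union> B)"
    by blast
  ultimately show "large_set G (L - (A \<union> B))"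
    by simp
qed

lemma small_set_left_translate:
  assumes small: "small_set G A" and "A \<subseteq> carrier G" "f \<in> carrier G"
  shows "small_set G ({f} <#> A)"
  unfolding small_set_def
proof (intro allI impI)
  fix L assume L: "L \<subseteq> carrier G" "large_set G L"
  define L' where "L' = {inv f} <#> L"
  have "L' \<subseteq> carrier G"
    unfolding L'_def using L assms by (intro setmult_subset_G) auto
  moreover have "large_set G L'"
    unfolding L'_def using L assms by (intro large_set_left_translate) auto
  ultimately have "large_set G (L' - A)"
    using small unfolding small_set_def by blast
  then have "large_set G ({f} <#> (L' - A))"
    using \<open>L' \<subseteq> carrier G\<close> assms by (intro large_set_left_translate) auto
  moreover have "{f} <#> (L' - A) = L - ({f} <#> A)"
  proof -
    have "L' - A \<subseteq> carrier G"
      using \<open>L' \<subseteq> carrier G\<close> by blast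
    then have "x \<in> {f} <#> (L' - A) \<longleftrightarrow> x \<in> carrier G \<and> inv f \<otimes> x \<in> L' \<and> inv f \<otimes> x \<notin> A"
      for x
      using assms(3) mem_set_mult_iff[of "{f}" "L' - A"] by auto
    moreover have "inv f \<otimes> x \<in> L' \<longleftrightarrow> x \<in> L" if "x \<in> carrier G" for x
      unfolding L'_def using that L assms by (simp add: mem_set_mult_iff m_assoc[symmetric])
    moreover have "x \<in> {f} <#> A \<longleftrightarrow> x \<in> carrier G \<and> inv f \<otimes> x \<in> A" for x
      using assms mem_set_mult_iff[of "{f}" A] by auto
    ultimately show ?thesis
      using L by (auto dest: subsetD)
  qed
  ultimately show "large_set G (L - ({f} <#> A))"
    by simp
qed

lemma small_set_set_mult:
  assumes "small_set G A" "A \<subseteq> carrier G" and "finite F" "F \<subseteq> carrier G"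
  shows "small_set G (F <#> A)"
  using assms(3,4)
proof (induction F rule: finite_induct)
  case empty
  then show ?case
    by (simp add: small_set_def set_mult_def)
next
  case (insert f F)
  have "insert f F <#> A = ({f} <#> A) \<union> (F <#> A)"
    unfolding set_mult_def by auto
  then show ?case
    using insert assms(1,2) by (simp add: small_set_Un small_set_left_translate)
qed

text \<open>If \<open>K\<close> witnesses that \<open>L\<close> is large and \<open>E\<close> that the complement of \<open>K A\<close> is large,
  then \<open>E K\<close> witnesses that \<open>L - A\<close> is large.\<close>

lemma small_set_iff_large_complements:
  assumes A: "A \<subseteq> carrier G"
  shows "small_set G A \<longleftrightarrow> (\<forall>F\<in>Fpow (carrier G). large_set G (carrier G - (F <#> A)))"
proof
  assume small: "small_set G A"
  show "\<forall>F\<in>Fpow (carrier G). large_set G (carrier G - (F <#> A))"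
  proof
    fix F assume "F \<in> Fpow (carrier G)"
    then have "small_set G (F <#> A)"
      using small A by (intro small_set_set_mult) (auto simp: Fpow_def)
    then show "large_set G (carrier G - (F <#> A))"
      using large_set_carrier unfolding small_set_def by simp
  qed
next
  assume H: "\<forall>F\<in>Fpow (carrier G). large_set G (carrier G - (F <#> A))"
  show "small_set G A"
    unfolding small_set_def
  proof (intro allI impI)
    fix L assume L: "L \<subseteq> carrier G" "large_set G L"
    then obtain K where K: "K \<in> Fpow (carrier G)" "\<forall>g\<in>carrier G. \<exists>k\<in>K. inv k \<otimes> g \<in> L"
      by (auto simp: large_set_iff)
    then have "large_set G (carrier G - (K <#> A))"
      using H by simp
    moreover have "carrier G - (K <#> A) \<subseteq> carrier G"
      by blast
    ultimately obtain E where E: "E \<in> Fpow (carrier G)"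
      "\<forall>g\<in>carrier G. \<exists>e\<in>E. inv e \<otimes> g \<in> carrier G - (K <#> A)"
      by (auto simp: large_set_iff)
    have KE: "K \<subseteq> carrier G" "E \<subseteq> carrier G"
      using K(1) E(1) by (auto simp: Fpow_def)
    have cover: "\<exists>h\<in>(\<lambda>(e, k). e \<otimes> k) ` (E \<times> K). inv h \<otimes> g \<in> L - A"
      if g: "g \<in> carrier G" for g
    proof -
      obtain e where e: "e \<in> E" "inv e \<otimes> g \<in> carrier G - (K <#> A)"
        using E g by blast
      obtain k where k: "k \<in> K" "inv k \<otimes> (inv e \<otimes> g) \<in> L"
        using K e(2) by blast
      have "inv k \<otimes> (inv e \<otimes> g) \<notin> A"
        using e(2) k(1) mem_set_mult_iff[OF KE(1) A] by blast
      moreover have "e \<in> carrier G" "k \<in> carrier G"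
        using e(1) k(1) KE by auto
      then have "inv (e \<otimes> k) \<otimes> g = inv k \<otimes> (inv e \<otimes> g)"
        using g by (simp add: inv_mult_group m_assoc)
      ultimately show ?thesis
        using e(1) k by (intro bexI[of _ "e \<otimes> k"]) auto
    qed
    have "(\<lambda>(e, k). e \<otimes> k) ` (E \<times> K) \<in> Fpow (carrier G)"
      using K(1) E(1) by (auto simp: Fpow_def)
    moreover have "L - A \<subseteq> carrier G"
      using L by blast
    ultimately show "large_set G (L - A)"
      using cover large_set_iff by blast
  qed
qed

lemma small_set_iff:
  assumes "A \<subseteq> carrier G"
  shows "small_set G A \<longleftrightarrow>
    (\<forall>F\<in>Fpow (carrier G). \<exists>E\<in>Fpow (carrier G). \<forall>g\<in>carrier G. \<exists>e\<in>E. inv e \<otimes> g \<notin> F <#> A)"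
proof -
  have "large_set G (carrier G - (F <#> A))
      \<longleftrightarrow> (\<exists>E\<in>Fpow (carrier G). \<forall>g\<in>carrier G. \<exists>e\<in>E. inv e \<otimes> g \<notin> F <#> A)" for F
  proof -
    have "carrier G - (F <#> A) \<subseteq> carrier G"
      by blast
    moreover have "inv e \<otimes> g \<in> carrier G" if "E \<in> Fpow (carrier G)" "e \<in> E" "g \<in> carrier G"
      for E e g
      using that by (auto simp: Fpow_def)
    ultimately show ?thesis
      by (simp add: large_set_iff)
  qed
  then show ?thesis
    using small_set_iff_large_complements[OF assms] by simp
qed

lemma thick_set_iff:
  assumes "A \<subseteq> carrier G"
  shows "thick_set G A \<longleftrightarrow> (\<forall>H\<in>Fpow (carrier G). \<exists>a\<in>carrier G. insert a (H #> a) \<subseteq> A)"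
proof -
  have "(\<exists>a\<in>A. H #> a \<subseteq> A) \<longleftrightarrow> (\<exists>a\<in>carrier G. insert a (H #> a) \<subseteq> A)" for H
    using assms by blast
  then show ?thesis
    unfolding thick_set_def Fpow_def by (simp add: conj_commute)
qed

lemma fsigma_in_LG:
  assumes "countable (carrier G)"
  shows "fsigma_in (PG_topology G) (LG G)"
proof -
  have "LG G = {X \<in> topspace (PG_topology G).
      \<exists>F\<in>Fpow (carrier G). \<forall>g\<in>carrier G. \<exists>f\<in>F. inv f \<otimes> g \<in> X}"
    unfolding LG_def topspace_PG_topology Pow_iff using large_set_iff by blast
  also have "fsigma_in (PG_topology G) \<dots>"
  proof (intro fsigma_in_Collect_Bex closedin_Collect_Ball countable_Fpow[OF assms(1)])
    fix F g assume "F \<in> Fpow (carrier G)" "g \<in> carrier G"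
    then show "closedin (PG_topology G) {X \<in> topspace (PG_topology G). \<exists>f\<in>F. inv f \<otimes> g \<in> X}"
      by (intro closedin_PG_topology_finitely_determined[where K = "(\<lambda>f. inv f \<otimes> g) ` F"])
        (auto simp: Fpow_def)
  qed
  finally show ?thesis .
qed

lemma gdelta_in_TG:
  assumes "countable (carrier G)"
  shows "gdelta_in (PG_topology G) (TG G)"
proof -
  have "TG G = {X \<in> topspace (PG_topology G).
      \<forall>H\<in>Fpow (carrier G). \<exists>a\<in>carrier G. insert a (H #> a) \<subseteq> X}"
    by (auto simp: TG_def topspace_PG_topology thick_set_iff)
  also have "gdelta_in (PG_topology G) \<dots>"
  proof (intro gdelta_in_Collect_Ball openin_Collect_Bex countable_Fpow[OF assms(1)])
    fix H a assume "H \<in> Fpow (carrier G)" "a \<in> carrier G"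
    then show "openin (PG_topology G) {X \<in> topspace (PG_topology G). insert a (H #> a) \<subseteq> X}"
      by (intro openin_PG_topology_finitely_determined[where K = "insert a (H #> a)"])
        (auto simp: Fpow_def r_coset_def)
  qed
  finally show ?thesis .
qed

lemma gdelta_sigma_in_PTG:
  assumes "countable (carrier G)"
  shows "gdelta_sigma_in (PG_topology G) (PTG G)"
proof -
  have "PTG G = {X \<in> topspace (PG_topology G). \<exists>F\<in>Fpow (carrier G).
      \<forall>H\<in>Fpow (carrier G). \<exists>a\<in>carrier G. insert a (H #> a) \<subseteq> F <#> X}"
    by (auto simp: PTG_def prethick_set_def topspace_PG_topology thick_set_iff setmult_subset_G
        Fpow_def)
  also have "gdelta_sigma_in (PG_topology G) \<dots>"
  proof (intro gdelta_sigma_in_Collect_Bex gdelta_in_Collect_Ball openin_Collect_Bex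
      countable_Fpow[OF assms(1)])
    fix F H a assume F: "F \<in> Fpow (carrier G)" and H: "H \<in> Fpow (carrier G)"
      and a: "a \<in> carrier G"
    define K where "K = (\<lambda>(f, k). inv f \<otimes> k) ` (F \<times> insert a (H #> a))"
    have "insert a (H #> a) \<subseteq> F <#> X \<longleftrightarrow> insert a (H #> a) \<subseteq> F <#> (X \<inter> K)"
      if "X \<subseteq> carrier G" for X
    proof -
      have "k \<in> F <#> (X \<inter> K) \<longleftrightarrow> k \<in> F <#> X" if "k \<in> insert a (H #> a)" for k
        using that \<open>X \<subseteq> carrier G\<close> F
        by (intro mem_set_mult_Int_iff) (auto simp: K_def Fpow_def)
      then show ?thesis
        by blast
    qed
    moreover have "finite K" "K \<subseteq> carrier G"
      using F H a by (auto simp: K_def Fpow_def r_coset_def)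
    ultimately show "openin (PG_topology G)
        {X \<in> topspace (PG_topology G). insert a (H #> a) \<subseteq> F <#> X}"
      by (intro openin_PG_topology_finitely_determined) auto
  qed
  finally show ?thesis .
qed

text \<open>Stated for a local map \<open>B\<close> so that it applies both to \<open>X\<close> and to its complement.\<close>

lemma fsigma_delta_in_Collect_small_set:
  assumes "countable (carrier G)"
    and B: "\<And>X. X \<subseteq> carrier G \<Longrightarrow> B X \<subseteq> carrier G"
      "\<And>X K. X \<subseteq> carrier G \<Longrightarrow> B (X \<inter> K) \<inter> K = B X \<inter> K"
  shows "fsigma_delta_in (PG_topology G) {X \<in> topspace (PG_topology G). small_set G (B X)}"
proof -
  have "{X \<in> topspace (PG_topology G). small_set G (B X)} = {X \<in> topspace (PG_topology G).
      \<forall>F\<in>Fpow (carrier G). \<exists>E\<in>Fpow (carrier G). \<forall>g\<in>carrier G. \<exists>e\<in>E. inv e \<otimes> g \<notin> F <#> B X}"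
    using B(1) by (auto simp: topspace_PG_topology small_set_iff)
  also have "fsigma_delta_in (PG_topology G) \<dots>"
  proof (intro fsigma_delta_in_Collect_Ball fsigma_in_Collect_Bex closedin_Collect_Ball
      countable_Fpow[OF assms(1)])
    fix F E g assume F: "F \<in> Fpow (carrier G)" and E: "E \<in> Fpow (carrier G)"
      and g: "g \<in> carrier G"
    define K where "K = (\<lambda>(e, f). inv f \<otimes> (inv e \<otimes> g)) ` (E \<times> F)"
    have "inv e \<otimes> g \<in> F <#> B X \<longleftrightarrow> inv e \<otimes> g \<in> F <#> B (X \<inter> K)"
      if "X \<subseteq> carrier G" "e \<in> E" for X e
    proof -
      have "F \<subseteq> carrier G" "\<And>f. f \<in> F \<Longrightarrow> inv f \<otimes> (inv e \<otimes> g) \<in> K"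
        using F \<open>e \<in> E\<close> by (auto simp: K_def Fpow_def)
      moreover have "X \<inter> K \<subseteq> carrier G"
        using that(1) by blast
      ultimately have "inv e \<otimes> g \<in> F <#> B X \<longleftrightarrow> inv e \<otimes> g \<in> F <#> (B X \<inter> K)"
        and "inv e \<otimes> g \<in> F <#> B (X \<inter> K) \<longleftrightarrow> inv e \<otimes> g \<in> F <#> (B (X \<inter> K) \<inter> K)"
        using that(1) B(1) by (simp_all add: mem_set_mult_Int_iff)
      then show ?thesis
        using B(2)[OF that(1)] by simp
    qed
    moreover have "finite K" "K \<subseteq> carrier G"
      using F E g by (auto simp: K_def Fpow_def subset_iff)
    ultimately show "closedin (PG_topology G)
        {X \<in> topspace (PG_topology G). \<exists>e\<in>E. inv e \<otimes> g \<notin> F <#> B X}"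
      by (intro closedin_PG_topology_finitely_determined) auto
  qed
  finally show ?thesis .
qed

lemma fsigma_delta_in_SG:
  assumes "countable (carrier G)"
  shows "fsigma_delta_in (PG_topology G) (SG G)"
  using fsigma_delta_in_Collect_small_set[OF assms, of "\<lambda>X. X"]
  by (simp add: SG_def topspace_PG_topology Int_assoc)

lemma fsigma_delta_in_ELG:
  assumes "countable (carrier G)"
  shows "fsigma_delta_in (PG_topology G) (ELG G)"
  using fsigma_delta_in_Collect_small_set[OF assms, of "\<lambda>X. carrier G - X"]
  by (auto simp: ELG_def extralarge_set_def topspace_PG_topology)

end

theorem theorem3p1:
  assumes "group G" and "countable (carrier G)"
  shows "fsigma_in (PG_topology G) (LG G)
       \<and> gdelta_in (PG_topology G) (TG G)
       \<and> gdelta_sigma_in (PG_topology G) (PTG G)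
       \<and> fsigma_delta_in (PG_topology G) (SG G)
       \<and> fsigma_delta_in (PG_topology G) (ELG G)"
proof -
  interpret group G
    by (rule assms(1))
  show ?thesis
    using assms(2) by (simp add: fsigma_in_LG gdelta_in_TG gdelta_sigma_in_PTG
        fsigma_delta_in_SG fsigma_delta_in_ELG)
qed

end
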